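(* Let $m=rn$ with $r\geq 2$ an integer, let $\underline{\theta},q>0$, let all utilities $u_i(j)$ ($i\in[n]$, $j\in[m]$) lie in $[0,1]$, let $\tau:=1-\left(\frac{64\log m}{\underline{\theta}n}\right)^{1/q}$ and $\tau':=3\tau-2$. Let $E_{\geq\tau}=\{(i,j): u_i(j)\geq\tau\}$, let $E^*_{\geq\tau}$ be the edge set produced by ThresholdMatchingWithRemoval$_\tau$ (see context), and for each agent $i$ let $M_{>\tau'}(i)=\{j\in M: u_i(j)>\tau'\}$. If $(i,j)\in E_{\geq\tau}\setminus E^*_{\geq\tau}$, then there exists an agent $i'$ such that $|M_{>\tau'}(i)\cap M_{>\tau'}(i')|>2r/3$ and $j\in M_{>\tau'}(i)\cap M_{>\tau'}(i')$.
   Context: Agents are $N=[n]$, items $M=[m]$. For a finite multiset $S$ of reals, sum-top$_r(S)$ is the sum of its $r$ largest elements (or of all elements if $|S|<r$). Procedure ThresholdMatchingWithRemoval$_\tau$: for each agent $i=1,\dots,n$, set $M^*_{\geq\tau}(i)\leftarrow\{j\in M: u_i(j)\geq\tau\}$; then for each $i'\in N\setminus\{i\}$ in turn, while sum-top$_r(\{u_{i'}(j): j\in M^*_{\geq\tau}(i)\})>r\tau$ (as a multiset), remove from $M^*_{\geq\tau}(i)$ the item(s) $j\in M^*_{\geq\tau}(i)$ maximizing $u_{i'}(j)$. Then $E^*_{\geq\tau}=\{(i,j): j\in M^*_{\geq\tau}(i)\text{ at the end}\}$. $\log$ is natural. *)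

theory Defs
  imports Complex_Main "HOL-Library.Multiset"
begin

definition sum_top :: "nat \<Rightarrow> real multiset \<Rightarrow> real" where
  "sum_top r S = sum_list (take r (rev (sorted_list_of_multiset S)))"

text \<open>Inner while-loop for a fixed other agent with utility v:
  while sum-top_r of the multiset {v j : j in S} exceeds r*tau, remove all
  items of S maximizing v.  (Stops when S is empty: nothing left to remove.)\<close>
function remove_loop :: "(nat \<Rightarrow> real) \<Rightarrow> nat \<Rightarrow> real \<Rightarrow> nat set \<Rightarrow> nat set" where
  "remove_loop v r \<tau> S =
     (if finite S \<and> S \<noteq> {} \<and> sum_top r (image_mset v (mset_set S)) > real r * \<tau>
      then remove_loop v r \<tau> (S - {j \<in> S. v j = Max (v ` S)})
      else S)"
  by auto
termination
proof (relation "measure (\<lambda>(v, r, \<tau>, S). card S)")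
  show "wf (measure (\<lambda>(v, r, \<tau>, S). card S))" by simp
next
  fix v :: "nat \<Rightarrow> real" and r \<tau> and S :: "nat set"
  assume h: "finite S \<and> S \<noteq> {} \<and> sum_top r (image_mset v (mset_set S)) > real r * \<tau>"
  then have "Max (v ` S) \<in> v ` S" by auto
  then obtain j where "j \<in> S" "v j = Max (v ` S)" by auto
  then have "card (S - {j \<in> S. v j = Max (v ` S)}) < card S"
    using h by (intro psubset_card_mono) auto
  then show "((v, r, \<tau>, S - {j \<in> S. v j = Max (v ` S)}), v, r, \<tau>, S)
             \<in> measure (\<lambda>(v, r, \<tau>, S). card S)" by simp
qed

declare remove_loop.simps [simp del]

text \<open>ThresholdMatchingWithRemoval_tau, agents N = {0..<n}, items M = {0..<m}:
  the final set M*_{>=tau}(i).  Other agents i' are processed in increasing order.\<close>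
definition threshold_set_removal ::
  "nat \<Rightarrow> nat \<Rightarrow> nat \<Rightarrow> real \<Rightarrow> (nat \<Rightarrow> nat \<Rightarrow> real) \<Rightarrow> nat \<Rightarrow> nat set" where
  "threshold_set_removal n m r \<tau> u i =
     foldl (\<lambda>S i'. remove_loop (u i') r \<tau> S)
           {j \<in> {0..<m}. u i j \<ge> \<tau>}
           (filter (\<lambda>i'. i' \<noteq> i) [0..<n])"

definition threshold_edges_removal ::
  "nat \<Rightarrow> nat \<Rightarrow> nat \<Rightarrow> real \<Rightarrow> (nat \<Rightarrow> nat \<Rightarrow> real) \<Rightarrow> (nat \<times> nat) set" where
  "threshold_edges_removal n m r \<tau> u =
     {(i, j). i \<in> {0..<n} \<and> j \<in> threshold_set_removal n m r \<tau> u i}"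

definition threshold_edges :: "nat \<Rightarrow> nat \<Rightarrow> real \<Rightarrow> (nat \<Rightarrow> nat \<Rightarrow> real) \<Rightarrow> (nat \<times> nat) set" where
  "threshold_edges n m \<tau> u = {(i, j). i \<in> {0..<n} \<and> j \<in> {0..<m} \<and> u i j \<ge> \<tau>}"

definition items_above :: "nat \<Rightarrow> real \<Rightarrow> (nat \<Rightarrow> nat \<Rightarrow> real) \<Rightarrow> nat \<Rightarrow> nat set" where
  "items_above m t u i = {j \<in> {0..<m}. u i j > t}"

end

theory Submission
  imports Defs
begin

text \<open>If j is removed from the threshold set of agent i, look at the moment of its removal:
  some other agent i' sees a set S of items, all of value at least \<tau> to i, whose r best items
  have total i'-value above r\<tau>, and j is among the i'-best items of S.  Since values are at
  most 1, more than 2r/3 of those r items must have i'-value above \<tau>' = 3\<tau> - 2; they all lie in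
  M_{>\<tau>'}(i) \<inter> M_{>\<tau>'}(i'), and so does j, which beats each of them.  When \<tau>' < 0 the claim
  is trivial with i' = i.\<close>

text \<open>The iteration of remove_loop v r t that starts from the current set S removes j.\<close>

definition loop_removes :: "(nat \<Rightarrow> real) \<Rightarrow> nat \<Rightarrow> real \<Rightarrow> nat set \<Rightarrow> nat \<Rightarrow> bool" where
  "loop_removes v r t S j \<longleftrightarrow>
     finite S \<and> j \<in> S \<and> real r * t < sum_top r (image_mset v (mset_set S)) \<and> v j = Max (v ` S)"

lemma remove_loop_subset: "remove_loop v r t S \<subseteq> S"
proof (induction v r t S rule: remove_loop.induct)
  case (1 v r t S)
  then show ?case by (subst remove_loop.simps) auto
qed

lemma remove_loop_removes:
  assumes "j \<in> S" and "j \<notin> remove_loop v r t S"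
  shows "\<exists>S'\<subseteq>S. loop_removes v r t S' j"
  using assms
proof (induction v r t S rule: remove_loop.induct)
  case (1 v r t S)
  define S\<^sub>1 where "S\<^sub>1 = S - {j \<in> S. v j = Max (v ` S)}"
  have step: "finite S \<and> S \<noteq> {} \<and> sum_top r (image_mset v (mset_set S)) > real r * t"
    using "1.prems" by (subst (asm) remove_loop.simps) (auto split: if_splits)
  show ?case
  proof (cases "v j = Max (v ` S)")
    case True
    then show ?thesis using step "1.prems"(1) unfolding loop_removes_def by blast
  next
    case False
    have "j \<in> S\<^sub>1" and "j \<notin> remove_loop v r t S\<^sub>1"
      using "1.prems" step False unfolding S\<^sub>1_def by (auto simp: remove_loop.simps[of v r t S])
    then show ?thesis using "1.IH"[OF step] unfolding S\<^sub>1_def by blast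
  qed
qed

lemma foldl_remove_loop_removes:
  assumes "j \<in> S" and "j \<notin> foldl (\<lambda>S i'. remove_loop (u i') r t S) S xs"
  shows "\<exists>i'\<in>set xs. \<exists>S'\<subseteq>S. loop_removes (u i') r t S' j"
  using assms
proof (induction xs arbitrary: S)
  case Nil
  then show ?case by simp
next
  case (Cons a xs)
  show ?case
  proof (cases "j \<in> remove_loop (u a) r t S")
    case True
    have "j \<notin> foldl (\<lambda>S i'. remove_loop (u i') r t S) (remove_loop (u a) r t S) xs"
      using Cons.prems(2) by simp
    then obtain i' S' where "i' \<in> set xs" "S' \<subseteq> remove_loop (u a) r t S" "loop_removes (u i') r t S' j"
      using Cons.IH[OF True] by blast
    then show ?thesis
      using remove_loop_subset by (metis list.set_intros(2) subset_trans)
  next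
    case False
    then show ?thesis
      using remove_loop_removes[OF Cons.prems(1) False] by (meson list.set_intros(1))
  qed
qed

lemma sum_list_le_count_above:
  fixes xs :: "real list" and c :: real
  assumes "\<forall>x\<in>set xs. x \<le> 1"
  shows "sum_list xs \<le> length (filter (\<lambda>x. c < x) xs) + length (filter (\<lambda>x. \<not> c < x) xs) * c"
  using assms by (induction xs) (auto simp: algebra_simps)

lemma length_filter_take_le: "length (filter P (take n xs)) \<le> length (filter P xs)"
  by (metis append_take_drop_id filter_append length_append le_add1)

lemma sum_top_gt_imp_many_above:
  fixes X :: "real multiset"
  assumes le1: "\<forall>x\<in>#X. x \<le> 1" and nonneg: "0 \<le> 3 * t - 2" and lt1: "t < 1"
    and top: "real r * t < sum_top r X"
  shows "2 * real r / 3 < size (filter_mset (\<lambda>x. 3 * t - 2 < x) X)"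
proof -
  define c where "c = 3 * t - 2"
  define L where "L = rev (sorted_list_of_multiset X)"
  define T where "T = take r L"
  define k where "k = length (filter (\<lambda>x. c < x) T)"
  have "k \<le> length T" and "length T \<le> r"
    unfolding k_def T_def by (rule length_filter_le, simp)
  then have "real (length T - k) \<le> real r - k"
    by (simp add: of_nat_diff)
  have "\<forall>x\<in>set T. x \<le> 1"
    using le1 unfolding T_def L_def by (auto dest: in_set_takeD)
  then have "sum_list T \<le> k + length (filter (\<lambda>x. \<not> c < x) T) * c"
    unfolding k_def by (rule sum_list_le_count_above)
  also have "length (filter (\<lambda>x. \<not> c < x) T) = length T - k"
    using sum_length_filter_compl[of "\<lambda>x. c < x" T] unfolding k_def by linarith
  also have "real k + real (length T - k) * c \<le> k + (real r - k) * c"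
    using \<open>real (length T - k) \<le> real r - k\<close> nonneg unfolding c_def
    by (intro add_left_mono mult_right_mono)
  finally have "real r * t < k + (real r - k) * c"
    using top unfolding sum_top_def T_def L_def by linarith
  then have "0 < (1 - t) * (3 * k - 2 * real r)"
    unfolding c_def by (simp add: algebra_simps)
  then have "2 * real r / 3 < k"
    using lt1 by (simp add: zero_less_mult_iff)
  also have "k \<le> length (filter (\<lambda>x. c < x) L)"
    unfolding k_def T_def by (rule length_filter_take_le)
  also have "\<dots> = size (filter_mset (\<lambda>x. c < x) X)"
    unfolding L_def by (metis mset_filter mset_rev mset_sorted_list_of_multiset size_mset)
  finally show ?thesis unfolding c_def by simp
qed

lemma loop_removes_many_above:
  assumes "loop_removes v r t S j" and "\<forall>x\<in>S. v x \<le> 1" and "0 \<le> 3 * t - 2" and "t < 1"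
  shows "2 * real r / 3 < card {x \<in> S. 3 * t - 2 < v x}" and "3 * t - 2 < v j"
proof -
  have fin: "finite S" and top: "real r * t < sum_top r (image_mset v (mset_set S))"
    and max: "v j = Max (v ` S)"
    using assms(1) unfolding loop_removes_def by auto
  have "2 * real r / 3 < size (filter_mset (\<lambda>x. 3 * t - 2 < x) (image_mset v (mset_set S)))"
    using assms(2-4) top fin by (intro sum_top_gt_imp_many_above) auto
  then show many: "2 * real r / 3 < card {x \<in> S. 3 * t - 2 < v x}"
    using fin by (simp add: filter_mset_image_mset)
  then have "card {x \<in> S. 3 * t - 2 < v x} \<noteq> 0"
    by (intro notI) simp
  then obtain y where "y \<in> S" and "3 * t - 2 < v y"
    by (metis (no_types, lifting) card.empty empty_Collect_eq)
  moreover have "v y \<le> v j"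
    using \<open>y \<in> S\<close> fin max by simp
  ultimately show "3 * t - 2 < v j" by simp
qed

lemma removed_edge_removes:
  assumes "(i, j) \<in> threshold_edges n m \<tau> u - threshold_edges_removal n m r \<tau> u"
  shows "\<exists>i'<n. \<exists>S\<subseteq>{x \<in> {0..<m}. \<tau> \<le> u i x}. loop_removes (u i') r \<tau> S j"
proof -
  have "j \<in> {x \<in> {0..<m}. \<tau> \<le> u i x}" and "i < n"
    and "j \<notin> foldl (\<lambda>S i'. remove_loop (u i') r \<tau> S) {x \<in> {0..<m}. \<tau> \<le> u i x}
                 (filter (\<lambda>i'. i' \<noteq> i) [0..<n])"
    using assms unfolding threshold_edges_def threshold_edges_removal_def threshold_set_removal_def
    by auto
  from foldl_remove_loop_removes[OF this(1,3)] show ?thesis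
    by auto
qed

lemma loop_removes_common_items_above:
  assumes "loop_removes (u i') r t S j" and "S \<subseteq> {x \<in> {0..<m}. t \<le> u i x}"
    and "\<forall>x\<in>S. u i' x \<le> 1" and "0 \<le> 3 * t - 2" and "t < 1"
  defines "A \<equiv> items_above m (3 * t - 2) u i \<inter> items_above m (3 * t - 2) u i'"
  shows "2 * real r / 3 < card A" and "j \<in> A"
proof -
  note above = loop_removes_many_above[OF assms(1,3-5)]
  have S_above: "S \<subseteq> items_above m (3 * t - 2) u i"
    using assms(2,5) unfolding items_above_def by auto
  then have "{x \<in> S. 3 * t - 2 < u i' x} \<subseteq> A"
    unfolding A_def items_above_def by blast
  then have "card {x \<in> S. 3 * t - 2 < u i' x} \<le> card A"
    by (rule card_mono[rotated]) (simp add: A_def items_above_def)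
  then show "2 * real r / 3 < card A"
    using above(1) by linarith
  show "j \<in> A"
    using assms(1) S_above above(2) unfolding A_def loop_removes_def items_above_def by auto
qed

theorem proposition3:
  fixes n m r :: nat and \<theta> q \<tau> \<tau>' :: real and u :: "nat \<Rightarrow> nat \<Rightarrow> real" and i j :: nat
  assumes "m = r * n" and "r \<ge> 2" and "\<theta> > 0" and "q > 0"
    and "\<forall>i\<in>{0..<n}. \<forall>j\<in>{0..<m}. 0 \<le> u i j \<and> u i j \<le> 1"
    and "\<tau> = 1 - (64 * ln (real m) / (\<theta> * real n)) powr (1 / q)"
    and "\<tau>' = 3 * \<tau> - 2"
    and "(i, j) \<in> threshold_edges n m \<tau> u - threshold_edges_removal n m r \<tau> u"
  shows "\<exists>i'\<in>{0..<n}. real (card (items_above m \<tau>' u i \<inter> items_above m \<tau>' u i')) > 2 * real r / 3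
           \<and> j \<in> items_above m \<tau>' u i \<inter> items_above m \<tau>' u i'"
proof -
  have i: "i < n" and j: "j < m"
    using assms(8) unfolding threshold_edges_def by auto
  have "r \<le> m"
    using assms(1) i by simp
  then have "0 < 64 * ln (real m) / (\<theta> * real n)"
    using assms(2,3) i by simp
  then have "0 < (64 * ln (real m) / (\<theta> * real n)) powr (1 / q)"
    by (simp only: powr_gt_zero)
  then have "\<tau> < 1"
    using assms(6) by linarith
  show ?thesis
  proof (cases "\<tau>' < 0")
    case True
    moreover have "\<forall>x\<in>{0..<m}. 0 \<le> u i x"
      using assms(5) i by simp
    ultimately have "items_above m \<tau>' u i = {0..<m}"
      unfolding items_above_def by fastforce
    then show ?thesis
      using i j \<open>r \<le> m\<close> assms(2) by (intro bexI[of _ i]) auto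
  next
    case False
    obtain i' S where "i' < n" and S: "S \<subseteq> {x \<in> {0..<m}. \<tau> \<le> u i x}"
      and removes: "loop_removes (u i') r \<tau> S j"
      using removed_edge_removes[OF assms(8)] by blast
    moreover have "\<forall>x\<in>S. u i' x \<le> 1"
      using S assms(5) \<open>i' < n\<close> by auto
    ultimately show ?thesis
      using loop_removes_common_items_above[OF removes S _ _ \<open>\<tau> < 1\<close>] False
      unfolding assms(7) by auto
  qed
qed

end
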